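(* Let $S$ be a standard quantum entity on a finite-dimensional complex Hilbert space $\mathcal{H}$ with set of states $\Sigma$. For $K\subseteq\Sigma$ let $L=\{c: p_{\bar c}\in K\}$. Then $K^\perp=\{p_{\bar c}: c\in L^\perp\}$ and $cl_{orth}(K)=\{p_{\bar c}: c\in cl(L)\}$, where $L^\perp$ is the orthogonal complement and $cl(L)=(L^\perp)^\perp$ the closed linear span of $L$ in $\mathcal{H}$. If $L$ is a closed subspace of $\mathcal{H}$ and $F=\{p_{\bar c}:c\in L\}$, then $F\in\mathcal{F}_{orth}$. Moreover $\mathcal{F}_{eig}=\mathcal{F}_{orth}$.
   Context: A spectral family of $\mathcal{H}$ is a set $E=\{E_1,\dots,E_r\}$ of pairwise orthogonal nonzero orthogonal projections with $\sum_kE_k=I$. The standard quantum entity has states $p_{\bar c}$ (one per ray $\bar c$, generated by a unit vector $c$), experiments $e_E$ (one per spectral family $E$), outcomes $x_{E_k}$ (one per orthogonal projection), and $O(e_E,p_{\bar c})=\{x_{E_k}:E_k\in E,E_kc\neq0\}$. State orthogonality: $p\perp q$ iff some experiment $e$ has $O(e,p)\cap O(e,q)=\emptyset$. For $K\subseteq\Sigma$, $K^\perp=\{p\in\Sigma:p\perp q\text{ for all }q\in K\}$, $cl_{orth}(K)=(K^\perp)^\perp$, and $\mathcal{F}_{orth}$ is the set of $K$ with $cl_{orth}(K)=K$. State eigen closure system: for an experiment $e$ with outcome set $O(e)=\bigcup_pO(e,p)$ and $A\subseteq O(e)$, $eig_e(A)=\{p: O(e,p)\subseteq A\}$; $\mathcal{F}_{eig}$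 is the set of all intersections of families of sets $eig_e(A)$ ($e$ ranging over experiments). *)

theory Defs
  imports "HOL-Analysis.Analysis"
begin

text \<open>The finite-dimensional complex Hilbert space is modelled as complex^'n
  ('n a finite index type), with the standard inner product (conjugate-linear
  in the first argument).\<close>

definition cinner :: "complex^'n::finite \<Rightarrow> complex^'n \<Rightarrow> complex" where
  "cinner x y = (\<Sum>i\<in>UNIV. cnj (x$i) * y$i)"

definition corth :: "(complex^'n::finite) set \<Rightarrow> (complex^'n) set" where
  "corth L = {x. \<forall>c\<in>L. cinner c x = 0}"

definition ccl :: "(complex^'n::finite) set \<Rightarrow> (complex^'n) set" where
  "ccl L = corth (corth L)"

definition csubspace :: "(complex^'n::finite) set \<Rightarrow> bool" where
  "csubspace L \<longleftrightarrow> 0 \<in> L \<and> (\<forall>x\<in>L. \<forall>y\<in>L. x + y \<in> L) \<and> (\<forall>z. \<forall>x\<in>L. z *s x \<in> L)"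

definition cadj :: "complex^'n::finite^'n \<Rightarrow> complex^'n^'n" where
  "cadj A = (\<chi> i j. cnj (A$j$i))"

definition orth_proj :: "complex^'n::finite^'n \<Rightarrow> bool" where
  "orth_proj P \<longleftrightarrow> P ** P = P \<and> cadj P = P"

definition spectral_family :: "(complex^'n::finite^'n) set \<Rightarrow> bool" where
  "spectral_family E \<longleftrightarrow> finite E \<and> (\<forall>P\<in>E. orth_proj P \<and> P \<noteq> 0)
     \<and> (\<forall>P\<in>E. \<forall>Q\<in>E. P \<noteq> Q \<longrightarrow> P ** Q = 0) \<and> sum id E = mat 1"

definition ray :: "complex^'n::finite \<Rightarrow> (complex^'n) set" where
  "ray c = {x. \<exists>z. z \<noteq> 0 \<and> x = z *s c}"

definition States :: "(complex^'n::finite) set set" where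
  "States = {ray c | c. c \<noteq> 0}"

text \<open>Outcome set of experiment e_E on state p: outcomes are identified with
  the projections in E.\<close>
definition Out :: "(complex^'n::finite^'n) set \<Rightarrow> (complex^'n) set \<Rightarrow> (complex^'n^'n) set" where
  "Out E p = {P\<in>E. \<exists>c\<in>p. P *v c \<noteq> 0}"

definition Out_exp :: "(complex^'n::finite^'n) set \<Rightarrow> (complex^'n^'n) set" where
  "Out_exp E = (\<Union>p\<in>States. Out E p)"

definition state_orth :: "(complex^'n::finite) set \<Rightarrow> (complex^'n) set \<Rightarrow> bool" where
  "state_orth p q \<longleftrightarrow> (\<exists>E. spectral_family E \<and> Out E p \<inter> Out E q = {})"

definition sorth :: "(complex^'n::finite) set set \<Rightarrow> (complex^'n) set set" where
  "sorth K = {p\<in>States. \<forall>q\<in>K. state_orth p q}"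

definition cl_orth :: "(complex^'n::finite) set set \<Rightarrow> (complex^'n) set set" where
  "cl_orth K = sorth (sorth K)"

definition F_orth :: "(complex^'n::finite) set set set" where
  "F_orth = {K. K \<subseteq> States \<and> cl_orth K = K}"

definition eig :: "(complex^'n::finite^'n) set \<Rightarrow> (complex^'n^'n) set \<Rightarrow> (complex^'n) set set" where
  "eig E A = {p\<in>States. Out E p \<subseteq> A}"

text \<open>Intersections of families of eigen sets (the empty family gives States).\<close>
definition F_eig :: "(complex^'n::finite) set set set" where
  "F_eig = {K. \<exists>\<F>. \<F> \<subseteq> {eig E A | E A. spectral_family E \<and> A \<subseteq> Out_exp E}
                 \<and> K = States \<inter> \<Inter>\<F>}"

end

theory Submission
  imports Defs
begin

text \<open>
  A spectral family resolves the identity into orthogonal projections, so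
  \<open>\<langle>c, d\<rangle> = (\<Sum>P\<in>E. \<langle>P c, P d\<rangle>)\<close>; if no outcome of \<open>e\<^sub>E\<close> is possible for both
  \<open>p\<^sub>c\<close> and \<open>p\<^sub>d\<close>, every term vanishes. Conversely, the yes-no experiment
  \<open>{P\<^sub>c, I - P\<^sub>c}\<close> of the line through \<open>c\<close> separates \<open>p\<^sub>c\<close> from every ray orthogonal
  to \<open>c\<close>. So orthogonality of states is orthogonality of vectors, which gives the
  descriptions of \<open>K\<^sup>\<bottom>\<close> and \<open>cl\<^sub>o\<^sub>r\<^sub>t\<^sub>h(K)\<close>, and the rays of any subspace form an
  orthogonally closed set.

  An eigen set \<open>eig\<^sub>e(A)\<close> consists of the rays in the common kernel of the projections
  outside \<open>A\<close>, a subspace, and orthogonally closed sets are closed under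
  intersections; hence \<open>\<F>\<^sub>e\<^sub>i\<^sub>g \<subseteq> \<F>\<^sub>o\<^sub>r\<^sub>t\<^sub>h\<close>. Conversely, the rays of \<open>(L\<^sup>\<bottom>)\<^sup>\<bottom>\<close> are the
  intersection, over \<open>d \<in> L\<^sup>\<bottom>\<close>, of the eigen sets "outcome \<open>P\<^sub>d\<close> impossible" of the
  yes-no experiments of the lines through \<open>d\<close>.
\<close>

lemma cinner_zero_left [simp]: "cinner 0 x = 0"
  by (simp add: cinner_def)

lemma cinner_zero_right [simp]: "cinner x 0 = 0"
  by (simp add: cinner_def)

lemma cinner_add_right: "cinner z (x + y) = cinner z x + cinner z y"
  by (simp add: cinner_def sum.distrib algebra_simps)

lemma cinner_smult_left: "cinner (a *s x) y = cnj a * cinner x y"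
  by (simp add: cinner_def sum_distrib_left algebra_simps)

lemma cinner_smult_right: "cinner x (a *s y) = a * cinner x y"
  by (simp add: cinner_def sum_distrib_left algebra_simps)

lemma cinner_commute: "cinner y x = cnj (cinner x y)"
  by (simp add: cinner_def mult.commute)

lemma cinner_eq_zero_sym: "cinner x y = 0 \<longleftrightarrow> cinner y x = 0"
  by (metis cinner_commute complex_cnj_zero_iff)

lemma cinner_sum_right: "finite A \<Longrightarrow> cinner x (sum f A) = (\<Sum>a\<in>A. cinner x (f a))"
  by (induction A rule: finite_induct) (auto simp: cinner_add_right)

lemma inner_vec_eq_Re_cinner: "inner x y = Re (cinner x y)"
  by (simp add: inner_vec_def cinner_def Re_sum inner_complex_def)

lemma cinner_self_eq_zero_iff [simp]: "cinner x x = 0 \<longleftrightarrow> x = 0"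
  by (metis cinner_zero_left inner_eq_zero_iff inner_vec_eq_Re_cinner zero_complex.sel(1))

lemma cinner_matrix_vector_mult_left: "cinner (A *v x) y = cinner x (cadj A *v y)"
proof -
  have "cinner (A *v x) y = (\<Sum>i\<in>UNIV. \<Sum>j\<in>UNIV. cnj (A$i$j) * cnj (x$j) * y$i)"
    by (simp add: cinner_def matrix_vector_mult_def sum_distrib_right)
  also have "\<dots> = (\<Sum>j\<in>UNIV. \<Sum>i\<in>UNIV. cnj (A$i$j) * cnj (x$j) * y$i)"
    by (rule sum.swap)
  also have "\<dots> = cinner x (cadj A *v y)"
    by (simp add: cinner_def cadj_def matrix_vector_mult_def sum_distrib_left algebra_simps)
  finally show ?thesis .
qed

section \<open>Orthogonal complements\<close>

lemma subset_ccl: "L \<subseteq> ccl L"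
  by (auto simp: ccl_def corth_def cinner_eq_zero_sym)

lemma corth_Diff_zero: "corth (S - {0}) = corth S"
  by (auto simp: corth_def)

lemma csubspace_corth: "csubspace (corth S)"
  by (simp add: csubspace_def corth_def cinner_add_right cinner_smult_right)

lemma csubspace_ccl: "csubspace (ccl S)"
  unfolding ccl_def by (rule csubspace_corth)

lemma scaleR_vec_eq_smult: "(r::real) *\<^sub>R (x::complex^'n::finite) = of_real r *s x"
  unfolding vec_eq_iff by (metis vector_scaleR_component vector_smult_component scaleR_conv_of_real)

lemma ccl_csubspace:
  assumes L: "csubspace L"
  shows "ccl L = L"
proof
  show "L \<subseteq> ccl L" by (rule subset_ccl)
  show "ccl L \<subseteq> L"
  proof
    fix x assume x: "x \<in> ccl L"
    have "subspace L"
      using L by (auto simp: subspace_def csubspace_def scaleR_vec_eq_smult)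
    then have span_L: "span L = L" by (simp add: span_eq_iff)
    obtain y z where y: "y \<in> L" and z_orth: "\<And>w. w \<in> L \<Longrightarrow> orthogonal z w" and x_eq: "x = y + z"
      using orthogonal_subspace_decomp_exists[of L x] span_L by metis
    \<comment> \<open>z is only real-orthogonal to L; testing against \<open>\<i> *s w\<close> kills the imaginary part.\<close>
    have "z \<in> corth L"
    proof (unfold corth_def, intro CollectI ballI)
      fix w assume w: "w \<in> L"
      have "Re (cinner v z) = 0" if "v \<in> L" for v
        using z_orth[OF that] by (simp add: orthogonal_def inner_vec_eq_Re_cinner[symmetric] inner_commute)
      moreover have "\<i> *s w \<in> L" using L w by (simp add: csubspace_def)
      ultimately have "Re (cinner w z) = 0" "Re (cinner (\<i> *s w) z) = 0"
        using w by blast+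
      then show "cinner w z = 0" by (simp add: cinner_smult_left complex_eq_iff)
    qed
    then have "cinner z x = 0" "cinner z y = 0"
      using x y by (auto simp: ccl_def corth_def cinner_eq_zero_sym)
    then have "cinner z z = 0"
      using x_eq by (simp add: cinner_add_right)
    then show "x \<in> L" using x_eq y by simp
  qed
qed

section \<open>Orthogonal projections and yes-no experiments\<close>

lemma cinner_orth_proj: "orth_proj P \<Longrightarrow> cinner (P *v x) (P *v y) = cinner x (P *v y)"
  by (simp add: orth_proj_def cinner_matrix_vector_mult_left matrix_vector_mul_assoc)

lemma orth_proj_complement:
  assumes "orth_proj P"
  shows "orth_proj (mat 1 - P)"
proof -
  have idem: "P *v (P *v x) = P *v x" for x
    using assms by (simp add: orth_proj_def matrix_vector_mul_assoc)
  have "(mat 1 - P) ** (mat 1 - P) = mat 1 - P"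
    by (simp add: matrix_eq idem matrix_vector_mult_diff_rdistrib matrix_vector_mult_diff_distrib
        flip: matrix_vector_mul_assoc)
  moreover have "cadj (mat 1 - P) = mat 1 - cadj P"
    by (simp add: cadj_def mat_def vec_eq_iff)
  ultimately show ?thesis
    using assms by (simp add: orth_proj_def)
qed

lemma orth_proj_mult_complement: "orth_proj P \<Longrightarrow> P ** (mat 1 - P) = 0"
  by (simp add: orth_proj_def matrix_eq matrix_vector_mult_diff_distrib
      matrix_vector_mult_diff_rdistrib flip: matrix_vector_mul_assoc)

lemma complement_mult_orth_proj: "orth_proj P \<Longrightarrow> (mat 1 - P) ** P = 0"
  by (simp add: orth_proj_def matrix_eq matrix_vector_mult_diff_rdistrib
      flip: matrix_vector_mul_assoc)

lemma orth_proj_neq_complement: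
  fixes P :: "complex^'n::finite^'n"
  assumes P: "orth_proj P"
  shows "P \<noteq> mat 1 - P"
proof
  assume eq: "P = mat 1 - P"
  then have "P = 0"
    using P orth_proj_mult_complement[OF P] by (metis orth_proj_def)
  with eq have "(mat 1 :: complex^'n^'n) = 0"
    by simp
  then have "(mat 1 :: complex^'n^'n) $ i $ i = 0" for i
    by (simp only: zero_index)
  then show False by (simp add: mat_def)
qed

text \<open>The zero matrix is removed so that the definition also covers \<open>P = 0\<close> and \<open>P = mat 1\<close>.\<close>
definition yes_no_family :: "complex^'n::finite^'n \<Rightarrow> (complex^'n^'n) set" where
  "yes_no_family P = {P, mat 1 - P} - {0}"

lemma spectral_family_yes_no_family:
  assumes P: "orth_proj P"
  shows "spectral_family (yes_no_family P)"
proof -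
  have "sum id (yes_no_family P) = sum id {P, mat 1 - P}"
    using sum.setdiff_irrelevant[of "{P, mat 1 - P}" id] by (simp add: yes_no_family_def)
  also have "\<dots> = mat 1"
    using orth_proj_neq_complement[OF P] by simp
  finally show ?thesis
    using P orth_proj_complement orth_proj_mult_complement complement_mult_orth_proj
    by (auto simp: spectral_family_def yes_no_family_def)
qed

definition line_proj :: "complex^'n::finite \<Rightarrow> complex^'n^'n" where
  "line_proj d = (\<chi> i j. d$i * cnj (d$j) / cinner d d)"

lemma line_proj_mult: "line_proj d *v x = (cinner d x / cinner d d) *s d"
  by (simp add: vec_eq_iff line_proj_def matrix_vector_mult_def cinner_def sum_distrib_left
      sum_distrib_right sum_divide_distrib algebra_simps)

lemma line_proj_self: "d \<noteq> 0 \<Longrightarrow> line_proj d *v d = d"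
  by (simp add: line_proj_mult)

lemma line_proj_eq_zero_iff: "d \<noteq> 0 \<Longrightarrow> line_proj d *v x = 0 \<longleftrightarrow> cinner d x = 0"
  by (auto simp: line_proj_mult vec_eq_iff)

lemma orth_proj_line_proj: "orth_proj (line_proj d)"
proof -
  have "line_proj d ** line_proj d = line_proj d"
    by (cases "d = 0")
      (auto simp: matrix_eq line_proj_mult cinner_smult_right simp flip: matrix_vector_mul_assoc)
  moreover have "cnj (d$j * cnj (d$i) / cinner d d) = d$i * cnj (d$j) / cinner d d" for i j
    by (metis cinner_commute complex_cnj_cnj complex_cnj_divide complex_cnj_mult mult.commute)
  ultimately show ?thesis
    by (simp add: orth_proj_def cadj_def line_proj_def vec_eq_iff)
qed

abbreviation rays :: "(complex^'n::finite) set \<Rightarrow> (complex^'n) set set" where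
  "rays S \<equiv> {ray c | c. c \<in> S \<and> c \<noteq> 0}"

abbreviation ray_vectors :: "(complex^'n::finite) set set \<Rightarrow> (complex^'n) set" where
  "ray_vectors K \<equiv> {c. c \<noteq> 0 \<and> ray c \<in> K}"

lemma ray_self: "c \<in> ray c"
  unfolding ray_def by (intro CollectI exI[of _ 1]) simp

lemma ray_eqD: "ray c = ray c' \<Longrightarrow> \<exists>z. z \<noteq> 0 \<and> c = z *s c'"
  using ray_self[of c] by (simp add: ray_def)

lemma ray_in_States_iff: "ray c \<in> States \<longleftrightarrow> c \<noteq> 0"
proof
  assume "ray c \<in> States"
  then obtain c' where "ray c' = ray c" "c' \<noteq> 0" by (auto simp: States_def)
  then obtain z where "c' = z *s c" using ray_eqD by blast
  with \<open>c' \<noteq> 0\<close> show "c \<noteq> 0" by auto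
qed (auto simp: States_def)

lemma StatesE:
  assumes "p \<in> States"
  obtains c where "c \<noteq> 0" "p = ray c"
  using assms by (auto simp: States_def)

lemma rays_subset_States: "rays S \<subseteq> States"
  by (auto simp: ray_in_States_iff)

lemma ray_in_rays_iff:
  assumes S: "csubspace S"
  shows "ray c \<in> rays S \<longleftrightarrow> c \<in> S \<and> c \<noteq> 0"
proof
  assume "ray c \<in> rays S"
  then obtain c' where c': "ray c = ray c'" "c' \<in> S" "c' \<noteq> 0" by blast
  then obtain z where "c = z *s c'" using ray_eqD by blast
  then have "c \<in> S" using S c' by (simp add: csubspace_def)
  moreover have "c \<noteq> 0" using c' ray_in_States_iff by metis
  ultimately show "c \<in> S \<and> c \<noteq> 0" ..
qed blast

lemma ray_vectors_rays: "csubspace S \<Longrightarrow> ray_vectors (rays S) = S - {0}"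
  using ray_in_rays_iff by blast

lemma Out_ray: "Out E (ray c) = {P\<in>E. P *v c \<noteq> 0}"
  by (auto simp: Out_def ray_def vector_scalar_commute intro: exI[of _ 1])

section \<open>Orthogonality of states\<close>

lemma state_orth_commute: "state_orth p q \<longleftrightarrow> state_orth q p"
  by (auto simp: state_orth_def Int_commute)

lemma sum_matrix_vector_mult: "finite E \<Longrightarrow> sum f E *v x = (\<Sum>P\<in>E. f P *v x)"
  by (induction E rule: finite_induct) (auto simp: matrix_vector_mult_add_rdistrib)

lemma spectral_family_cinner:
  assumes E: "spectral_family E"
  shows "cinner x y = (\<Sum>P\<in>E. cinner (P *v x) (P *v y))"
proof -
  have fin: "finite E" and sum_E: "sum id E = mat 1"
    using E by (auto simp: spectral_family_def)
  have "cinner x y = cinner x (sum id E *v y)"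
    by (simp only: sum_E matrix_vector_mul_lid)
  also have "\<dots> = (\<Sum>P\<in>E. cinner x (P *v y))"
    by (simp add: fin sum_matrix_vector_mult cinner_sum_right)
  also have "\<dots> = (\<Sum>P\<in>E. cinner (P *v x) (P *v y))"
    using E by (intro sum.cong) (auto simp: spectral_family_def cinner_orth_proj)
  finally show ?thesis .
qed

lemma state_orth_ray_iff:
  assumes c: "c \<noteq> 0"
  shows "state_orth (ray c) (ray d) \<longleftrightarrow> cinner c d = 0"
proof
  assume "state_orth (ray c) (ray d)"
  then obtain E where E: "spectral_family E" and "Out E (ray c) \<inter> Out E (ray d) = {}"
    by (auto simp: state_orth_def)
  then have "P *v c = 0 \<or> P *v d = 0" if "P \<in> E" for P
    using that by (auto simp: Out_ray)
  then have "cinner (P *v c) (P *v d) = 0" if "P \<in> E" for P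
    using that by fastforce
  then show "cinner c d = 0"
    using spectral_family_cinner[OF E, of c d] by simp
next
  assume cd: "cinner c d = 0"
  let ?E = "yes_no_family (line_proj c)"
  have "Out ?E (ray c) \<subseteq> {line_proj c}"
    using line_proj_self[OF c] by (auto simp: Out_ray yes_no_family_def matrix_vector_mult_diff_rdistrib)
  moreover have "line_proj c \<notin> Out ?E (ray d)"
    using line_proj_eq_zero_iff[OF c] cd by (simp add: Out_ray)
  ultimately show "state_orth (ray c) (ray d)"
    using spectral_family_yes_no_family[OF orth_proj_line_proj]
    by (auto simp: state_orth_def)
qed

lemma sorth_subset_States: "sorth K \<subseteq> States"
  by (auto simp: sorth_def)

lemma sorth_eq:
  assumes K: "K \<subseteq> States"
  shows "sorth K = rays (corth (ray_vectors K))"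
proof (intro set_eqI iffI)
  fix p assume p: "p \<in> sorth K"
  then obtain c where c: "c \<noteq> 0" "p = ray c"
    by (auto simp: sorth_def elim: StatesE)
  have "c \<in> corth (ray_vectors K)"
  proof (unfold corth_def, intro CollectI ballI)
    fix l assume "l \<in> ray_vectors K"
    then have "state_orth (ray c) (ray l)"
      using p c by (simp add: sorth_def)
    then show "cinner l c = 0"
      using state_orth_ray_iff[OF c(1)] cinner_eq_zero_sym by blast
  qed
  with c show "p \<in> rays (corth (ray_vectors K))" by blast
next
  fix p assume "p \<in> rays (corth (ray_vectors K))"
  then obtain c where c: "p = ray c" "c \<in> corth (ray_vectors K)" "c \<noteq> 0" by blast
  have "state_orth p q" if "q \<in> K" for q
  proof -
    have "q \<in> States" using K that by blast
    then obtain l where l: "l \<noteq> 0" "q = ray l" by (rule StatesE)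
    then have "cinner l c = 0"
      using c that by (simp add: corth_def)
    then have "cinner c l = 0"
      using cinner_eq_zero_sym by blast
    then show ?thesis
      unfolding c(1) l(2) using state_orth_ray_iff[OF c(3)] by blast
  qed
  then show "p \<in> sorth K"
    using c by (auto simp: sorth_def ray_in_States_iff)
qed

lemma cl_orth_eq:
  assumes "K \<subseteq> States"
  shows "cl_orth K = rays (ccl (ray_vectors K))"
proof -
  have "cl_orth K = rays (corth (ray_vectors (sorth K)))"
    unfolding cl_orth_def by (rule sorth_eq[OF sorth_subset_States])
  also have "ray_vectors (sorth K) = corth (ray_vectors K) - {0}"
    using sorth_eq[OF assms] ray_vectors_rays[OF csubspace_corth] by simp
  finally show ?thesis
    by (simp only: ccl_def corth_Diff_zero)
qed

lemma rays_in_F_orth: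
  assumes "csubspace L"
  shows "rays L \<in> F_orth"
proof -
  have "cl_orth (rays L) = rays (ccl (ray_vectors (rays L)))"
    by (rule cl_orth_eq[OF rays_subset_States])
  also have "\<dots> = rays (ccl (L - {0}))"
    by (simp only: ray_vectors_rays[OF assms])
  also have "\<dots> = rays L"
    using ccl_csubspace[OF assms] by (simp add: ccl_def corth_Diff_zero)
  finally show ?thesis
    using rays_subset_States by (simp add: F_orth_def)
qed

section \<open>Orthogonally closed sets and eigen sets\<close>

lemma sorth_antimono: "K \<subseteq> K' \<Longrightarrow> sorth K' \<subseteq> sorth K"
  by (auto simp: sorth_def)

lemma cl_orth_mono: "K \<subseteq> K' \<Longrightarrow> cl_orth K \<subseteq> cl_orth K'"
  by (simp add: cl_orth_def sorth_antimono)

lemma subset_cl_orth: "K \<subseteq> States \<Longrightarrow> K \<subseteq> cl_orth K"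
  using state_orth_commute by (auto simp: cl_orth_def sorth_def)

lemma Inter_in_F_orth:
  assumes "\<F> \<subseteq> F_orth"
  shows "States \<inter> \<Inter>\<F> \<in> F_orth"
proof -
  let ?K = "States \<inter> \<Inter>\<F>"
  have "cl_orth ?K \<subseteq> F" if "F \<in> \<F>" for F
  proof -
    have "cl_orth ?K \<subseteq> cl_orth F"
      using that by (intro cl_orth_mono) blast
    also have "\<dots> = F"
      using assms that by (auto simp: F_orth_def)
    finally show ?thesis .
  qed
  moreover have "cl_orth ?K \<subseteq> States"
    by (simp add: cl_orth_def sorth_subset_States)
  ultimately have "cl_orth ?K \<subseteq> ?K" by blast
  with subset_cl_orth[of ?K] show ?thesis
    by (auto simp: F_orth_def)
qed

lemma csubspace_common_kernel: "csubspace {x. \<forall>P\<in>M. P *v x = 0}"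
  by (simp add: csubspace_def matrix_vector_right_distrib vector_scalar_commute)

lemma eig_eq_rays: "eig E A = rays {c. \<forall>P\<in>E - A. P *v c = 0}"
proof (intro set_eqI iffI)
  fix p assume p: "p \<in> eig E A"
  then have "p \<in> States" by (simp add: eig_def)
  then obtain c where "c \<noteq> 0" "p = ray c" by (rule StatesE)
  with p show "p \<in> rays {c. \<forall>P\<in>E - A. P *v c = 0}"
    by (auto simp: eig_def Out_ray)
next
  fix p assume "p \<in> rays {c. \<forall>P\<in>E - A. P *v c = 0}"
  then show "p \<in> eig E A"
    by (auto simp: eig_def Out_ray ray_in_States_iff)
qed

lemma eig_in_F_orth: "eig E A \<in> F_orth"
  unfolding eig_eq_rays by (rule rays_in_F_orth[OF csubspace_common_kernel])

lemma F_eig_subset_F_orth: "F_eig \<subseteq> F_orth"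
proof
  fix K assume "K \<in> F_eig"
  then obtain \<F> where "\<F> \<subseteq> {eig E A | E A. spectral_family E \<and> A \<subseteq> Out_exp E}"
    and K: "K = States \<inter> \<Inter>\<F>"
    by (auto simp: F_eig_def)
  then have "\<F> \<subseteq> F_orth"
    using eig_in_F_orth by blast
  then show "K \<in> F_orth"
    unfolding K by (rule Inter_in_F_orth)
qed

lemma Out_exp_eq:
  assumes "0 \<notin> E"
  shows "Out_exp E = E"
proof
  show "Out_exp E \<subseteq> E" by (auto simp: Out_exp_def Out_def)
  show "E \<subseteq> Out_exp E"
  proof
    fix P assume "P \<in> E"
    with assms obtain x where x: "P *v x \<noteq> 0"
      using matrix_eq[of P 0] by auto
    then have "ray x \<in> States" by (auto simp: ray_in_States_iff)
    moreover have "P \<in> Out E (ray x)" using \<open>P \<in> E\<close> x by (simp add: Out_ray)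
    ultimately show "P \<in> Out_exp E" by (auto simp: Out_exp_def)
  qed
qed

lemma ray_in_eig_yes_no_iff:
  assumes d: "d \<noteq> 0"
  shows "ray c \<in> eig (yes_no_family (line_proj d)) (yes_no_family (line_proj d) - {line_proj d})
    \<longleftrightarrow> c \<noteq> 0 \<and> cinner d c = 0"
proof -
  let ?Y = "yes_no_family (line_proj d)"
  have "line_proj d \<noteq> 0"
    using line_proj_self[OF d] d by auto
  then have "?Y - (?Y - {line_proj d}) = {line_proj d}"
    by (auto simp: yes_no_family_def)
  then show ?thesis
    unfolding eig_eq_rays ray_in_rays_iff[OF csubspace_common_kernel]
    using line_proj_eq_zero_iff[OF d] by auto
qed

lemma F_orth_subset_F_eig: "F_orth \<subseteq> F_eig"
proof
  fix K assume "K \<in> F_orth"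
  then have K_States: "K \<subseteq> States" and K_closed: "cl_orth K = K"
    by (auto simp: F_orth_def)
  let ?L = "ray_vectors K"
  have K_eq: "rays (ccl ?L) = K"
    using K_closed cl_orth_eq[OF K_States] by metis
  let ?test = "\<lambda>d. eig (yes_no_family (line_proj d)) (yes_no_family (line_proj d) - {line_proj d})"
  define \<F> where "\<F> = ?test ` (corth ?L - {0})"
  have "?test d \<in> {eig E A | E A. spectral_family E \<and> A \<subseteq> Out_exp E}" for d
  proof -
    let ?Y = "yes_no_family (line_proj d)"
    have "0 \<notin> ?Y" by (simp add: yes_no_family_def)
    then have "?Y - {line_proj d} \<subseteq> Out_exp ?Y"
      using Out_exp_eq by blast
    then show ?thesis
      using spectral_family_yes_no_family[OF orth_proj_line_proj] by blast
  qed
  then have "\<F> \<subseteq> {eig E A | E A. spectral_family E \<and> A \<subseteq> Out_exp E}"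
    by (auto simp: \<F>_def)
  moreover have "K = States \<inter> \<Inter>\<F>"
  proof (intro set_eqI)
    fix p
    show "p \<in> K \<longleftrightarrow> p \<in> States \<inter> \<Inter>\<F>"
    proof (cases "p \<in> States")
      case False
      then show ?thesis using K_States by blast
    next
      case True
      then obtain c where c: "c \<noteq> 0" "p = ray c" by (rule StatesE)
      have "p \<in> K \<longleftrightarrow> ray c \<in> rays (ccl ?L)"
        by (simp only: K_eq c(2))
      also have "\<dots> \<longleftrightarrow> c \<in> ccl ?L"
        using ray_in_rays_iff[OF csubspace_ccl] c(1) by blast
      also have "\<dots> \<longleftrightarrow> (\<forall>d\<in>corth ?L - {0}. cinner d c = 0)"
        by (auto simp: ccl_def corth_def[of "corth _"])
      also have "\<dots> \<longleftrightarrow> p \<in> \<Inter>\<F>"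
        using ray_in_eig_yes_no_iff c by (auto simp: \<F>_def)
      finally show ?thesis using True by blast
    qed
  qed
  ultimately show "K \<in> F_eig"
    by (auto simp: F_eig_def)
qed

lemma F_eig_eq_F_orth: "F_eig = F_orth"
  using F_eig_subset_F_orth F_orth_subset_F_eig by blast

theorem mainTheorem17:
  fixes dummy :: "'n::finite"
  shows "(\<forall>K::(complex^'n) set set. K \<subseteq> States \<longrightarrow>
            (let L = {c. c \<noteq> 0 \<and> ray c \<in> K} in
               sorth K = {ray c | c. c \<in> corth L \<and> c \<noteq> 0}
             \<and> cl_orth K = {ray c | c. c \<in> ccl L \<and> c \<noteq> 0}))
       \<and> (\<forall>L::(complex^'n) set. csubspace L \<and> closed L \<longrightarrow>
            {ray c | c. c \<in> L \<and> c \<noteq> 0} \<in> F_orth)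
       \<and> (F_eig :: (complex^'n) set set set) = F_orth"
proof (intro conjI allI impI)
  fix K :: "(complex^'n) set set"
  assume "K \<subseteq> States"
  then show "let L = ray_vectors K in sorth K = rays (corth L) \<and> cl_orth K = rays (ccl L)"
    by (simp add: sorth_eq cl_orth_eq)
next
  fix L :: "(complex^'n) set"
  \<comment> \<open>In finite dimension every subspace is closed.\<close>
  assume "csubspace L \<and> closed L"
  then show "rays L \<in> F_orth"
    by (simp add: rays_in_F_orth)
qed (rule F_eig_eq_F_orth)

end
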